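(* For $n\in\mathbb{N}^\star$ and $x\ge0$ let $\phi_n(x)=\int_0^\pi e^{-2x\sin\eta}e^{2in\eta}\,\mathrm{d}\eta$. Then for every $n\ge1$ and every $x>0$ we have $\phi_n(x)>0$, and for every fixed $x>0$ the sequence $n\mapsto\phi_n(x)$ is strictly decreasing.
   Context: The function $\phi_n$ is real-valued (its imaginary part vanishes by the symmetry $\eta\mapsto\pi-\eta$). *)

theory Defs
  imports "HOL-Analysis.Analysis"
begin

definition phi :: "nat \<Rightarrow> real \<Rightarrow> complex" where
  "phi n x = integral {0..pi}
     (\<lambda>\<eta>. complex_of_real (exp (- 2 * x * sin \<eta>)) * exp (\<i> * of_real (2 * real n * \<eta>)))"

end

theory Submission
  imports Defs
begin

text \<open>
  \<open>Re (phi n x)\<close> is \<open>F\<^sub>n(x) = \<integral>\<^sub>0\<^sup>\<pi> cos(2n\<eta>) exp(-2x sin \<eta>) d\<eta>\<close>.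
  Differentiating under the integral sign, \<open>F\<^sub>n\<close> solves the inhomogeneous Bessel-type equation
  \<open>x\<^sup>2 F'' + x F' - 4 (x\<^sup>2 + n\<^sup>2) F = -4x\<close>, because the residual integrand is an exact
  derivative in \<open>\<eta>\<close>. For \<open>n \<ge> 1\<close> we have \<open>F\<^sub>n(0) = 0\<close> and \<open>F\<^sub>n(x) \<rightarrow> 0\<close> as \<open>x \<rightarrow> \<infinity>\<close>.
  A function with these boundary values satisfying \<open>x\<^sup>2 f'' + x f' - c f < 0\<close> with \<open>c \<ge> 0\<close>
  is positive: at a nonpositive interior minimum the left-hand side would be \<open>\<ge> 0\<close>.
  This gives \<open>F\<^sub>n > 0\<close>, and then \<open>F\<^sub>n - F\<^sub>n\<^sub>+\<^sub>1\<close> satisfies the same inequality with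
  \<open>c = 4 (x\<^sup>2 + n\<^sup>2)\<close>, its residual being \<open>-4 (2n + 1) F\<^sub>n\<^sub>+\<^sub>1 < 0\<close>.
\<close>

lemma local_min_second_deriv_nonneg:
  fixes f f' f'' :: "real \<Rightarrow> real"
  assumes f': "\<And>x. (f has_real_derivative f' x) (at x)"
    and f'': "(f' has_real_derivative f'' z) (at z)"
    and "e > 0" and local_min: "\<And>y. \<bar>y - z\<bar> < e \<Longrightarrow> f z \<le> f y"
  shows "f' z = 0" and "f'' z \<ge> 0"
proof -
  show f'_z: "f' z = 0"
    by (rule DERIV_local_min[OF f' \<open>e > 0\<close>]) (use local_min in \<open>auto simp: abs_minus_commute\<close>)
  show "f'' z \<ge> 0"
  proof (rule ccontr)
    assume "\<not> f'' z \<ge> 0"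
    then obtain d where "d > 0" and f'_dec: "\<And>h. h > 0 \<Longrightarrow> h < d \<Longrightarrow> f' (z + h) < f' z"
      using DERIV_neg_dec_right[OF f''] by force
    define h where "h = min d e / 2"
    have h: "0 < h" "h < d" "h < e"
      using \<open>d > 0\<close> \<open>e > 0\<close> by (auto simp: h_def)
    obtain \<xi> where \<xi>: "z < \<xi>" "\<xi> < z + h" and mvt: "f (z + h) - f z = h * f' \<xi>"
      using MVT2[of z "z + h" f f'] f' h by auto
    have "f' \<xi> < 0"
      using f'_dec[of "\<xi> - z"] \<xi> h f'_z by simp
    then have "f (z + h) < f z"
      using mvt mult_pos_neg[OF \<open>h > 0\<close>] by fastforce
    with local_min[of "z + h"] h show False
      by simp
  qed
qed

locale euler_supersolution =
  fixes f f' f'' c :: "real \<Rightarrow> real"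
  assumes has_deriv: "\<And>x. (f has_real_derivative f' x) (at x)"
    and has_deriv2: "\<And>x. (f' has_real_derivative f'' x) (at x)"
    and c_nonneg: "\<And>x. c x \<ge> 0"
    and supersolution: "\<And>x. x > 0 \<Longrightarrow> x\<^sup>2 * f'' x + x * f' x - c x * f x < 0"
begin

lemma no_nonpos_local_min:
  assumes "z > 0" "f z \<le> 0" "e > 0" "\<And>y. \<bar>y - z\<bar> < e \<Longrightarrow> f z \<le> f y"
  shows False
proof -
  have "f' z = 0" "f'' z \<ge> 0"
    using local_min_second_deriv_nonneg[of f f' f'' z, OF has_deriv has_deriv2 assms(3,4)] by auto
  then have "z\<^sup>2 * f'' z + z * f' z \<ge> 0"
    by simp
  moreover have "c z * f z \<le> 0"
    using c_nonneg[of z] \<open>f z \<le> 0\<close> by (simp add: mult_nonneg_nonpos)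
  ultimately show False
    using supersolution[OF \<open>z > 0\<close>] by linarith
qed

lemma nonneg:
  assumes f_0: "f 0 = 0" and f_lim: "(\<lambda>k. f (real k)) \<longlonglongrightarrow> 0" and "y > 0"
  shows "f y \<ge> 0"
proof (rule ccontr)
  assume "\<not> f y \<ge> 0"
  then have "f y < 0" by simp
  have "\<forall>\<^sub>F k in sequentially. f y < f (real k)"
    using order_tendsto_iff[THEN iffD1, OF f_lim] \<open>f y < 0\<close> by blast
  moreover have "\<forall>\<^sub>F k in sequentially. y < real k"
    using filterlim_real_sequentially by (simp add: filterlim_at_top_dense)
  ultimately obtain k where "f y < f (real k)" "y < real k"
    using eventually_happens'[OF sequentially_bot eventually_conj] by blast
  have "continuous_on {0..real k} f"
    using has_deriv by (meson DERIV_isCont continuous_at_imp_continuous_on)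
  then obtain z where z: "z \<in> {0..real k}" and z_min: "\<And>w. w \<in> {0..real k} \<Longrightarrow> f z \<le> f w"
    using continuous_attains_inf[of "{0..real k}" f] \<open>y < real k\<close> by auto
  have "f z \<le> f y"
    using z_min \<open>y > 0\<close> \<open>y < real k\<close> by simp
  then have "0 < z" "z < real k"
    using z f_0 \<open>f y < 0\<close> \<open>f y < f (real k)\<close> by (auto simp: order.order_iff_strict)
  show False
  proof (rule no_nonpos_local_min)
    show "0 < z" "f z \<le> 0" "min z (real k - z) > 0"
      using \<open>0 < z\<close> \<open>z < real k\<close> \<open>f z \<le> f y\<close> \<open>f y < 0\<close> by auto
    show "f z \<le> f w" if "\<bar>w - z\<bar> < min z (real k - z)" for w
      using that by (intro z_min) auto
  qed
qed

lemma pos: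
  assumes "f 0 = 0" and "(\<lambda>k. f (real k)) \<longlonglongrightarrow> 0" and "x > 0"
  shows "f x > 0"
proof (rule ccontr)
  assume "\<not> f x > 0"
  then have "f x \<le> 0" by simp
  show False
  proof (rule no_nonpos_local_min[OF \<open>x > 0\<close> \<open>f x \<le> 0\<close> \<open>x > 0\<close>])
    show "f x \<le> f y" if "\<bar>y - x\<bar> < x" for y
      using nonneg[OF assms(1,2), of y] that \<open>f x \<le> 0\<close> by (simp add: abs_less_iff)
  qed
qed

end

lemma integral_eq_0_if_antisymmetric:
  fixes h :: "real \<Rightarrow> 'b::real_normed_vector"
  assumes "\<And>t. h (a + b - t) = - h t"
  shows "integral {a..b} h = 0"
proof -
  have "integral {a..b} h = integral {a..b} (\<lambda>t. h (a + b - t))"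
    using integral_shift_real_ivl[where f="\<lambda>t. h (- t)" and a="-b" and b="-a" and c="-(a+b)"]
    by (simp add: add.commute)
  also have "\<dots> = - integral {a..b} h"
    by (simp add: assms)
  finally have "2 *\<^sub>R integral {a..b} h = 0"
    by (simp add: scaleR_2 eq_neg_iff_add_eq_0)
  then show ?thesis
    by simp
qed

definition sin_laplace :: "(real \<Rightarrow> real) \<Rightarrow> real \<Rightarrow> real" where
  "sin_laplace a x = integral {0..pi} (\<lambda>t. a t * exp (- 2 * x * sin t))"

lemma has_integral_sin_laplace:
  assumes "continuous_on {0..pi} a"
  shows "((\<lambda>t. a t * exp (- 2 * x * sin t)) has_integral sin_laplace a x) {0..pi}"
  unfolding sin_laplace_def
  by (intro integrable_integral integrable_continuous_interval continuous_intros assms)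

lemma has_real_derivative_sin_laplace:
  assumes a: "continuous_on {0..pi} a"
  shows "(sin_laplace a has_real_derivative sin_laplace (\<lambda>t. - 2 * sin t * a t) x) (at x)"
proof -
  have "continuous_on (UNIV \<times> cbox 0 pi) (\<lambda>p. a (snd p))"
    by (rule continuous_on_compose2[OF a continuous_on_snd]) auto
  then have "((\<lambda>x. integral (cbox 0 pi) (\<lambda>t. a t * exp (- 2 * x * sin t))) has_field_derivative
      integral (cbox 0 pi) (\<lambda>t. - 2 * sin t * a t * exp (- 2 * x * sin t))) (at x within UNIV)"
    using a
    by (intro leibniz_rule_field_derivative)
       (auto intro!: derivative_eq_intros integrable_continuous_interval continuous_intros simp: case_prod_beta)
  then show ?thesis
    unfolding sin_laplace_def[abs_def] by (simp add: cbox_interval)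
qed

lemma sin_laplace_tendsto_0:
  assumes a: "continuous_on {0..pi} a"
  shows "(\<lambda>k. sin_laplace a (real k)) \<longlonglongrightarrow> 0"
proof -
  have "(\<lambda>k. integral {0<..<pi} (\<lambda>t. a t * exp (- 2 * real k * sin t))) \<longlonglongrightarrow> integral {0<..<pi} (\<lambda>t. 0)"
  proof (rule dominated_convergence(2))
    show "(\<lambda>t. a t * exp (- 2 * real k * sin t)) integrable_on {0<..<pi}" for k
      unfolding integrable_on_open_interval_real
      by (intro integrable_continuous_interval continuous_intros a)
    show "(\<lambda>t. norm (a t)) integrable_on {0<..<pi}"
      unfolding integrable_on_open_interval_real
      by (intro integrable_continuous_interval continuous_intros a)
    show "norm (a t * exp (- 2 * real k * sin t)) \<le> norm (a t)" if "t \<in> {0<..<pi}" for k t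
      using sin_gt_zero[of t] that by (simp add: abs_mult mult_left_le)
    show "(\<lambda>k. a t * exp (- 2 * real k * sin t)) \<longlonglongrightarrow> 0" if "t \<in> {0<..<pi}" for t
    proof -
      have "exp (- 2 * real k * sin t) = exp (- 2 * sin t) ^ k" for k
        by (simp add: exp_of_nat_mult[symmetric] mult_ac)
      moreover have "(\<lambda>k. exp (- 2 * sin t) ^ k) \<longlonglongrightarrow> 0"
        using sin_gt_zero[of t] that by (intro LIMSEQ_power_zero) auto
      ultimately show ?thesis
        using tendsto_mult_right_zero by simp
    qed
  qed
  then show ?thesis
    by (simp add: sin_laplace_def integral_open_interval_real)
qed

lemma has_integral_bessel_residual:
  fixes x :: real and n :: nat
  shows "((\<lambda>t. (4 * x\<^sup>2 * (sin t)\<^sup>2 - 2 * x * sin t - 4 * (x\<^sup>2 + (real n)\<^sup>2))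
            * cos (2 * real n * t) * exp (- 2 * x * sin t)) has_integral - 4 * x) {0..pi}"
proof -
  define G where "G t = (2 * x * cos t * cos (2 * real n * t) - 2 * real n * sin (2 * real n * t))
      * exp (- 2 * x * sin t)" for t
  have "(G has_real_derivative (4 * x\<^sup>2 * (sin t)\<^sup>2 - 2 * x * sin t - 4 * (x\<^sup>2 + (real n)\<^sup>2))
            * cos (2 * real n * t) * exp (- 2 * x * sin t)) (at t)" for t
    unfolding G_def sin_squared_eq
    by (auto intro!: derivative_eq_intros simp: algebra_simps power2_eq_square)
  then have "((\<lambda>t. (4 * x\<^sup>2 * (sin t)\<^sup>2 - 2 * x * sin t - 4 * (x\<^sup>2 + (real n)\<^sup>2))
            * cos (2 * real n * t) * exp (- 2 * x * sin t)) has_integral G pi - G 0) {0..pi}"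
    by (intro fundamental_theorem_of_calculus)
       (auto simp: has_real_derivative_iff_has_vector_derivative[symmetric] intro: DERIV_subset)
  moreover have "G pi - G 0 = - 4 * x"
    using sin_npi[of "2 * n"] cos_npi_int[of "2 * int n"] by (simp add: G_def mult_ac)
  ultimately show ?thesis
    by simp
qed

definition phi_re :: "nat \<Rightarrow> real \<Rightarrow> real" where
  "phi_re n = sin_laplace (\<lambda>t. cos (2 * real n * t))"

definition phi_re' :: "nat \<Rightarrow> real \<Rightarrow> real" where
  "phi_re' n = sin_laplace (\<lambda>t. - 2 * sin t * cos (2 * real n * t))"

definition phi_re'' :: "nat \<Rightarrow> real \<Rightarrow> real" where
  "phi_re'' n = sin_laplace (\<lambda>t. 4 * (sin t)\<^sup>2 * cos (2 * real n * t))"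

lemma has_real_derivative_phi_re: "(phi_re n has_real_derivative phi_re' n x) (at x)"
  unfolding phi_re_def phi_re'_def
  by (intro has_real_derivative_sin_laplace continuous_intros)

lemma has_real_derivative_phi_re': "(phi_re' n has_real_derivative phi_re'' n x) (at x)"
  using has_real_derivative_sin_laplace[of "\<lambda>t. - 2 * sin t * cos (2 * real n * t)" x]
  unfolding phi_re'_def phi_re''_def
  by (simp add: continuous_intros power2_eq_square mult_ac)

lemma phi_re_bessel_ode:
  "x\<^sup>2 * phi_re'' n x + x * phi_re' n x - 4 * (x\<^sup>2 + (real n)\<^sup>2) * phi_re n x = - 4 * x"
proof -
  let ?E = "\<lambda>t. exp (- 2 * x * sin t)"
  have "((\<lambda>t. x\<^sup>2 * (4 * (sin t)\<^sup>2 * cos (2 * real n * t) * ?E t)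
          + x * (- 2 * sin t * cos (2 * real n * t) * ?E t)
          - 4 * (x\<^sup>2 + (real n)\<^sup>2) * (cos (2 * real n * t) * ?E t)) has_integral
        x\<^sup>2 * phi_re'' n x + x * phi_re' n x - 4 * (x\<^sup>2 + (real n)\<^sup>2) * phi_re n x) {0..pi}"
    unfolding phi_re_def phi_re'_def phi_re''_def
    by (intro has_integral_diff has_integral_add has_integral_mult_right
        has_integral_sin_laplace continuous_intros)
  moreover have "x\<^sup>2 * (4 * (sin t)\<^sup>2 * cos (2 * real n * t) * ?E t)
          + x * (- 2 * sin t * cos (2 * real n * t) * ?E t)
          - 4 * (x\<^sup>2 + (real n)\<^sup>2) * (cos (2 * real n * t) * ?E t)
        = (4 * x\<^sup>2 * (sin t)\<^sup>2 - 2 * x * sin t - 4 * (x\<^sup>2 + (real n)\<^sup>2))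
            * cos (2 * real n * t) * ?E t" for t
    by (simp add: algebra_simps)
  ultimately show ?thesis
    using has_integral_bessel_residual[of x n] has_integral_unique by simp
qed

lemma phi_re_at_0:
  assumes "n \<ge> 1"
  shows "phi_re n 0 = 0"
proof -
  have "((\<lambda>t. sin (2 * real n * t) / (2 * real n)) has_real_derivative cos (2 * real n * t)) (at t)" for t
    using assms by (auto intro!: derivative_eq_intros)
  then have "((\<lambda>t. cos (2 * real n * t)) has_integral
      sin (2 * real n * pi) / (2 * real n) - sin (2 * real n * 0) / (2 * real n)) {0..pi}"
    by (intro fundamental_theorem_of_calculus)
       (auto simp: has_real_derivative_iff_has_vector_derivative[symmetric] intro: DERIV_subset)
  moreover have "sin (2 * real n * pi) = 0"
    using sin_npi[of "2 * n"] by (simp add: mult_ac)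
  ultimately show ?thesis
    by (simp add: phi_re_def sin_laplace_def integral_unique)
qed

lemma phi_re_tendsto_0: "(\<lambda>k. phi_re n (real k)) \<longlonglongrightarrow> 0"
  unfolding phi_re_def by (intro sin_laplace_tendsto_0 continuous_intros)

lemma phi_eq_phi_re: "phi n x = complex_of_real (phi_re n x)"
proof -
  let ?F = "\<lambda>t. complex_of_real (exp (- 2 * x * sin t)) * exp (\<i> * of_real (2 * real n * t))"
  have F: "(?F has_integral phi n x) {0..pi}"
    unfolding phi_def by (intro integrable_integral integrable_continuous_interval continuous_intros)
  have Re_F: "Re (?F t) = cos (2 * real n * t) * exp (- 2 * x * sin t)"
    and Im_F: "Im (?F t) = exp (- 2 * x * sin t) * sin (2 * real n * t)" for t
    by (simp_all add: Re_exp Im_exp)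
  have Re: "((\<lambda>t. cos (2 * real n * t) * exp (- 2 * x * sin t)) has_integral Re (phi n x)) {0..pi}"
    using has_integral_Re[OF F] unfolding Re_F .
  have Im: "((\<lambda>t. exp (- 2 * x * sin t) * sin (2 * real n * t)) has_integral Im (phi n x)) {0..pi}"
    using has_integral_Im[OF F] unfolding Im_F .
  have "sin (2 * real n * (0 + pi - t)) = - sin (2 * real n * t)" for t
  proof -
    have "sin (2 * real n * (0 + pi - t)) = sin (real (2 * n) * pi - 2 * real n * t)"
      by (simp add: algebra_simps)
    then show ?thesis
      by (simp add: sin_diff)
  qed
  then have "integral {0..pi} (\<lambda>t. exp (- 2 * x * sin t) * sin (2 * real n * t)) = 0"
    by (intro integral_eq_0_if_antisymmetric) simp
  then show ?thesis
    using Re Im by (simp add: complex_eq_iff phi_re_def sin_laplace_def integral_unique)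
qed

lemma phi_re_pos:
  assumes "n \<ge> 1" and "x > 0"
  shows "phi_re n x > 0"
proof -
  have "euler_supersolution (phi_re n) (phi_re' n) (phi_re'' n) (\<lambda>x. 4 * (x\<^sup>2 + (real n)\<^sup>2))"
    using phi_re_bessel_ode
    by unfold_locales (auto intro: has_real_derivative_phi_re has_real_derivative_phi_re')
  from euler_supersolution.pos[OF this phi_re_at_0[OF assms(1)] phi_re_tendsto_0 assms(2)]
  show ?thesis .
qed

lemma phi_re_Suc_less:
  assumes "n \<ge> 1" and "x > 0"
  shows "phi_re (Suc n) x < phi_re n x"
proof -
  let ?f = "\<lambda>x. phi_re n x - phi_re (Suc n) x"
  have "euler_supersolution ?f (\<lambda>x. phi_re' n x - phi_re' (Suc n) x)
      (\<lambda>x. phi_re'' n x - phi_re'' (Suc n) x) (\<lambda>x. 4 * (x\<^sup>2 + (real n)\<^sup>2))"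
  proof
    fix y :: real
    assume "y > 0"
    have "y\<^sup>2 * (phi_re'' n y - phi_re'' (Suc n) y) + y * (phi_re' n y - phi_re' (Suc n) y)
          - 4 * (y\<^sup>2 + (real n)\<^sup>2) * ?f y
        = (y\<^sup>2 * phi_re'' n y + y * phi_re' n y - 4 * (y\<^sup>2 + (real n)\<^sup>2) * phi_re n y)
          - (y\<^sup>2 * phi_re'' (Suc n) y + y * phi_re' (Suc n) y
             - 4 * (y\<^sup>2 + (real (Suc n))\<^sup>2) * phi_re (Suc n) y)
          - 4 * (2 * real n + 1) * phi_re (Suc n) y" (is "?residual = _")
      by (simp add: algebra_simps power2_eq_square)
    also have "\<dots> = - (4 * (2 * real n + 1) * phi_re (Suc n) y)"
      unfolding phi_re_bessel_ode by (simp add: algebra_simps)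
    also have "\<dots> < 0"
      using phi_re_pos[of "Suc n" y] \<open>y > 0\<close> by simp
    finally show "?residual < 0" .
  qed (auto intro!: DERIV_diff has_real_derivative_phi_re has_real_derivative_phi_re')
  from euler_supersolution.pos[OF this] have "?f x > 0"
    using assms phi_re_at_0 tendsto_diff[OF phi_re_tendsto_0 phi_re_tendsto_0] by simp
  then show ?thesis
    by simp
qed

theorem proposition3p2:
  shows "(\<forall>n::nat. \<forall>x::real. n \<ge> 1 \<longrightarrow> x > 0 \<longrightarrow>
            Im (phi n x) = 0 \<and> Re (phi n x) > 0)
       \<and> (\<forall>x::real. x > 0 \<longrightarrow>
            (\<forall>n::nat. n \<ge> 1 \<longrightarrow> Re (phi (Suc n) x) < Re (phi n x)))"
  by (simp add: phi_eq_phi_re phi_re_pos phi_re_Suc_less)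

end
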